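(* Let $\lambda>0$ and $P(A)=\sum_{1\le i<j\le3}\lambda_i(A)\lambda_j(A)-\lambda\sum_{i=1}^3\lambda_i(A)$ for $A\in\mathbb{R}^{3\times3}$. Then (a) $\lambda\mathbf{1}$ is a point of rank-one convexity of $P$, i.e. for all $a,n\in\mathbb{R}^3$ the function $t\mapsto P(\lambda\mathbf{1}+t\,a\otimes n)$ is convex on $\mathbb{R}$; but (b) $P$ is not polyconvex at $\lambda\mathbf{1}$, i.e. there is no $(C_1,C_2,C_3)\in\mathbb{R}^{3\times3}\times\mathbb{R}^{3\times3}\times\mathbb{R}$ such that $P(A)\ge P(\lambda\mathbf{1})+C_1\cdot(A-\lambda\mathbf{1})+C_2\cdot(\operatorname{cof}A-\lambda^2\mathbf{1})+C_3(\det A-\lambda^3)$ for all $A\in\mathbb{R}^{3\times3}$.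
   Context: $\lambda_1(A),\lambda_2(A),\lambda_3(A)$ denote the singular values of $A$ (square roots of the eigenvalues of $A^TA$); $\mathbf{1}$ is the $3\times3$ identity; $A\cdot B=\operatorname{tr}(A^TB)$; $\operatorname{cof}A$ is the cofactor matrix; $a\otimes n$ is the matrix with entries $a_in_j$. *)

theory Defs
  imports "HOL-Analysis.Analysis" "HOL-Computational_Algebra.Polynomial"
begin

definition charpoly :: "real^'n^'n \<Rightarrow> real poly" where
  "charpoly M = det (\<chi> i j. (if i = j then [:0, 1:] else 0) - [:M $ i $ j:])"

definition eigenvalues_mset :: "real^'n^'n \<Rightarrow> real multiset" where
  "eigenvalues_mset M = proots (charpoly M)"

text \<open>Singular values: square roots of the eigenvalues of A^T A, listed in
  decreasing order lambda_1 \<ge> lambda_2 \<ge> lambda_3 (list index 0,1,2).\<close>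
definition singvals :: "real^'n^'n \<Rightarrow> real list" where
  "singvals A = rev (sorted_list_of_multiset (image_mset sqrt (eigenvalues_mset (transpose A ** A))))"

definition sv :: "real^3^3 \<Rightarrow> nat \<Rightarrow> real" where
  "sv A i = singvals A ! (i - 1)"

definition frob :: "real^'n^'n \<Rightarrow> real^'n^'n \<Rightarrow> real" where
  "frob A B = trace (transpose A ** B)"

text \<open>Cofactor matrix: (cof A)_{ij} = (-1)^{i+j} times the (i,j) minor, expressed as the
  determinant of A with row i replaced by the j-th unit vector (Laplace expansion).\<close>
definition cof :: "real^'n^'n \<Rightarrow> real^'n^'n" where
  "cof A = (\<chi> i j. det (\<chi> k. if k = i then axis j 1 else A $ k))"

definition tensor :: "real^'n \<Rightarrow> real^'n \<Rightarrow> real^'n^'n" where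
  "tensor a n = (\<chi> i j. a $ i * n $ j)"

definition Pfun :: "real \<Rightarrow> real^3^3 \<Rightarrow> real" where
  "Pfun lam A = (\<Sum>i\<in>{1..3}. \<Sum>j\<in>{i<..3}. sv A i * sv A j) - lam * (\<Sum>i\<in>{1..3}. sv A i)"

end

theory Submission
  imports Defs
begin

text \<open>
  Along a rank-one line through \<open>\<lambda>\<one>\<close> the matrix \<open>M\<^sup>TM\<close> keeps the eigenvalue \<open>\<lambda>\<^sup>2\<close>, and its other
  two eigenvalues multiply to \<open>(det M / \<lambda>)\<^sup>2 = (\<lambda>\<^sup>2 + \<lambda> t a\<cdot>n)\<^sup>2\<close>. Hence the two singular values
  besides \<open>\<lambda>\<close> cancel against the linear term of \<open>P\<close>, leaving \<open>\<bar>\<lambda>\<^sup>2 + \<lambda> t a\<cdot>n\<bar> - \<lambda>\<^sup>2\<close>, which is convex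
  in \<open>t\<close>. On diagonal matrices \<open>\<lambda> diag(y)\<close> a polyconvexity inequality would make
  \<open>\<sigma>\<^sub>2(\<bar>y\<bar>) - \<sigma>\<^sub>1(\<bar>y\<bar>)\<close> dominate a multi-affine function of \<open>y\<close> touching it at \<open>(1,1,1)\<close>; evaluating
  at finitely many points with entries in \<open>{-1,0,1,2}\<close> forces contradictory linear constraints
  on its coefficients.
\<close>

lemma poly_charpoly_3:
  fixes M :: "real^3^3"
  shows "poly (charpoly M) x = det (\<chi> i j. (if i = j then x else 0) - M$i$j)"
  unfolding charpoly_def det_3 by (simp add: algebra_simps)

lemma Pfun_eq_if_charpoly_AtA:
  fixes A :: "real^3^3"
  assumes h: "charpoly (transpose A ** A) = [:-p,1:] * [:-q,1:] * [:-r,1:]"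
  shows "Pfun lam A = sqrt p * sqrt q + sqrt p * sqrt r + sqrt q * sqrt r - lam * (sqrt p + sqrt q + sqrt r)"
proof -
  have "eigenvalues_mset (transpose A ** A) = {#p,q,r#}"
    unfolding eigenvalues_mset_def h
    by (subst proots_mult, simp, simp)+ (simp add: add_ac)
  then have ms: "mset (singvals A) = {#sqrt p, sqrt q, sqrt r#}"
    unfolding singvals_def by simp
  then have "length (singvals A) = 3"
    by (metis size_mset size_add_mset size_empty numeral_3_eq_3 One_nat_def)
  then obtain u v w where L: "singvals A = [u,v,w]"
    by (metis (no_types) length_0_conv length_Suc_conv numeral_3_eq_3)
  have m: "{#u,v,w#} = {#sqrt p, sqrt q, sqrt r#}" using ms L by simp
  have e1: "u + v + w = sqrt p + sqrt q + sqrt r"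
    using arg_cong[OF m, of sum_mset] by (simp add: add_ac)
  have "u^2 + v^2 + w^2 = (sqrt p)^2 + (sqrt q)^2 + (sqrt r)^2"
    using arg_cong[OF m, of "\<lambda>M. sum_mset (image_mset (\<lambda>x. x^2) M)"] by (simp add: add_ac)
  moreover have "(u + v + w)^2 = (sqrt p + sqrt q + sqrt r)^2" using e1 by simp
  ultimately have e2: "u * v + u * w + v * w = sqrt p * sqrt q + sqrt p * sqrt r + sqrt q * sqrt r"
    by (simp add: power2_eq_square algebra_simps)
  have "{1..3::nat} = {1,2,3}" "{Suc 0<..3::nat} = {2,3}" "{2<..3::nat} = {3}" "{3<..3::nat} = {}"
    by auto
  then have "Pfun lam A = u * v + u * w + v * w - lam * (u + v + w)"
    unfolding Pfun_def sv_def by (simp add: L algebra_simps)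
  then show ?thesis using e1 e2 by simp
qed

definition diag3 :: "real \<Rightarrow> real \<Rightarrow> real \<Rightarrow> real^3^3" where
  "diag3 x y z = (\<chi> i j. if i = j then vector [x,y,z] $ i else 0)"

lemma diag3_nth: "diag3 x y z $ i $ j = (if i = j then vector [x,y,z] $ i else 0)"
  unfolding diag3_def by simp

lemma scaleR_mat_1_eq_diag3: "c *\<^sub>R mat 1 = diag3 c c c"
  by (simp add: vec_eq_iff forall_3 diag3_nth mat_def)

lemma diag3_diff: "diag3 x y z - diag3 a b c = diag3 (x - a) (y - b) (z - c)"
  by (simp add: vec_eq_iff forall_3 diag3_nth)

lemma det_diag3: "det (diag3 x y z) = x * y * z"
  unfolding det_3 by (simp add: diag3_nth)

lemma cof_diag3: "cof (diag3 x y z) = diag3 (y * z) (x * z) (x * y)"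
  unfolding cof_def by (simp add: vec_eq_iff forall_3 det_3 diag3_nth axis_def)

lemma frob_diag3: "frob C (diag3 x y z) = C$1$1 * x + C$2$2 * y + C$3$3 * z"
  unfolding frob_def trace_def
  by (simp add: matrix_matrix_mult_def transpose_def sum_3 diag3_nth)

lemma Pfun_diag3:
  "Pfun lam (diag3 x y z) = \<bar>x\<bar> * \<bar>y\<bar> + \<bar>x\<bar> * \<bar>z\<bar> + \<bar>y\<bar> * \<bar>z\<bar> - lam * (\<bar>x\<bar> + \<bar>y\<bar> + \<bar>z\<bar>)"
proof -
  have "poly (charpoly (transpose (diag3 x y z) ** diag3 x y z)) t
      = poly ([:-(x^2),1:] * [:-(y^2),1:] * [:-(z^2),1:]) t" for t
    unfolding poly_charpoly_3 det_3
    by (simp add: matrix_matrix_mult_def transpose_def sum_3 diag3_nth power2_eq_square)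
       (simp add: algebra_simps)
  then have "charpoly (transpose (diag3 x y z) ** diag3 x y z) = [:-(x^2),1:] * [:-(y^2),1:] * [:-(z^2),1:]"
    using poly_eq_poly_eq_iff by blast
  from Pfun_eq_if_charpoly_AtA[OF this, of lam] show ?thesis by simp
qed

lemma no_multiaffine_minorant:
  fixes c1 c2 c3 d1 d2 d3 e :: real
  assumes le: "\<And>y1 y2 y3. c1 * (y1 - 1) + c2 * (y2 - 1) + c3 * (y3 - 1)
      + d1 * (y2 * y3 - 1) + d2 * (y1 * y3 - 1) + d3 * (y1 * y2 - 1) + e * (y1 * y2 * y3 - 1)
    \<le> \<bar>y1\<bar> * \<bar>y2\<bar> + \<bar>y1\<bar> * \<bar>y3\<bar> + \<bar>y2\<bar> * \<bar>y3\<bar> - (\<bar>y1\<bar> + \<bar>y2\<bar> + \<bar>y3\<bar>)"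
  shows False
proof -
  have A1: "c1 + c2 + c3 + 2 * (d1 + d2 + d3) + 3 * e = 3"
    using le[of 2 1 1] le[of 1 2 1] le[of 1 1 2] le[of 0 1 1] le[of 1 0 1] le[of 1 1 0]
    by simp
  have A2: "d1 + d2 + d3 + 3 * e = 3"
    using le[of 2 2 1] le[of 2 1 2] le[of 1 2 2] le[of 2 0 1] le[of 2 1 0] le[of 0 2 1]
      le[of 0 1 2] le[of 1 2 0] le[of 1 0 2] A1
    by simp
  have A3: "e = 0"
    using le[of 2 2 2] le[of 0 0 0] A1 A2 by simp
  show False
    using le[of "-1" "-1" 0] le[of "-1" 0 "-1"] le[of 0 "-1" "-1"] A1 A2 A3 by simp
qed

lemma Pfun_not_polyconvex_at_scaled_identity:
  fixes lam :: real
  assumes lam: "lam > 0"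
  shows "\<not> (\<exists>(C1 :: real^3^3) (C2 :: real^3^3) (C3 :: real). \<forall>A :: real^3^3.
          Pfun lam A \<ge> Pfun lam (lam *\<^sub>R mat 1) + frob C1 (A - lam *\<^sub>R mat 1)
            + frob C2 (cof A - lam^2 *\<^sub>R mat 1) + C3 * (det A - lam^3))"
proof
  assume "\<exists>(C1 :: real^3^3) (C2 :: real^3^3) (C3 :: real). \<forall>A :: real^3^3.
          Pfun lam A \<ge> Pfun lam (lam *\<^sub>R mat 1) + frob C1 (A - lam *\<^sub>R mat 1)
            + frob C2 (cof A - lam^2 *\<^sub>R mat 1) + C3 * (det A - lam^3)"
  then obtain C1 C2 :: "real^3^3" and C3 :: real where H: "\<And>A. Pfun lam A \<ge> Pfun lam (lam *\<^sub>R mat 1)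
      + frob C1 (A - lam *\<^sub>R mat 1) + frob C2 (cof A - lam^2 *\<^sub>R mat 1) + C3 * (det A - lam^3)"
    by blast
  show False
  proof (rule no_multiaffine_minorant)
    fix y1 y2 y3 :: real
    let ?lhs = "C1$1$1 / lam * (y1 - 1) + C1$2$2 / lam * (y2 - 1) + C1$3$3 / lam * (y3 - 1)
      + C2$1$1 * (y2 * y3 - 1) + C2$2$2 * (y1 * y3 - 1) + C2$3$3 * (y1 * y2 - 1)
      + C3 * lam * (y1 * y2 * y3 - 1)"
    let ?rhs = "\<bar>y1\<bar> * \<bar>y2\<bar> + \<bar>y1\<bar> * \<bar>y3\<bar> + \<bar>y2\<bar> * \<bar>y3\<bar> - (\<bar>y1\<bar> + \<bar>y2\<bar> + \<bar>y3\<bar>)"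
    have "Pfun lam (lam *\<^sub>R mat 1) + frob C1 (diag3 (lam * y1) (lam * y2) (lam * y3) - lam *\<^sub>R mat 1)
        + frob C2 (cof (diag3 (lam * y1) (lam * y2) (lam * y3)) - lam^2 *\<^sub>R mat 1)
        + C3 * (det (diag3 (lam * y1) (lam * y2) (lam * y3)) - lam^3) = lam^2 * ?lhs"
      using lam
      by (simp add: scaleR_mat_1_eq_diag3 diag3_diff cof_diag3 det_diag3 Pfun_diag3 frob_diag3
          power2_eq_square power3_eq_cube field_simps)
    moreover have "Pfun lam (diag3 (lam * y1) (lam * y2) (lam * y3)) = lam^2 * ?rhs"
      using lam by (simp add: Pfun_diag3 abs_mult power2_eq_square algebra_simps)
    ultimately have "lam^2 * ?lhs \<le> lam^2 * ?rhs"
      using H[of "diag3 (lam * y1) (lam * y2) (lam * y3)"] by simp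
    then show "?lhs \<le> ?rhs" using lam by simp
  qed
qed

lemma convex_on_abs_affine: "convex_on UNIV (\<lambda>t::real. \<bar>p + q * t\<bar>)"
proof (rule convex_onI)
  fix t x y :: real
  assume "0 < t" "t < 1"
  have "p + q * ((1 - t) *\<^sub>R x + t *\<^sub>R y) = (1 - t) * (p + q * x) + t * (p + q * y)"
    by (simp add: algebra_simps)
  also have "\<bar>\<dots>\<bar> \<le> (1 - t) * \<bar>p + q * x\<bar> + t * \<bar>p + q * y\<bar>"
    using \<open>0 < t\<close> \<open>t < 1\<close> abs_triangle_ineq[of "(1 - t) * (p + q * x)" "t * (p + q * y)"]
    by (simp add: abs_mult)
  finally show "\<bar>p + q * ((1 - t) *\<^sub>R x + t *\<^sub>R y)\<bar> \<le> (1 - t) * \<bar>p + q * x\<bar> + t * \<bar>p + q * y\<bar>" .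
qed simp

lemma split_sum_product_nonneg:
  fixes s p :: real
  assumes "2 * \<bar>p\<bar> \<le> s"
  obtains r1 r2 where "r1 \<ge> 0" "r2 \<ge> 0" "r1 + r2 = s" "r1 * r2 = p^2"
proof
  have "4 * p^2 \<le> s^2"
    using assms abs_ge_zero[of p] power_mono[OF assms, of 2] by (simp add: power_mult_distrib)
  moreover have "0 \<le> s"
    using assms abs_ge_zero[of p] by linarith
  ultimately have D: "0 \<le> s^2 - 4 * p^2" and "sqrt (s^2 - 4 * p^2) \<le> s" "0 \<le> s"
    using real_sqrt_le_mono[of "s^2 - 4 * p^2" "s^2"] by simp_all
  then show "(s + sqrt (s^2 - 4 * p^2)) / 2 \<ge> 0" "(s - sqrt (s^2 - 4 * p^2)) / 2 \<ge> 0"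
    by simp_all
  show "(s + sqrt (s^2 - 4 * p^2)) / 2 + (s - sqrt (s^2 - 4 * p^2)) / 2 = s"
    by (simp add: field_simps)
  show "(s + sqrt (s^2 - 4 * p^2)) / 2 * ((s - sqrt (s^2 - 4 * p^2)) / 2) = p^2"
    using D by (simp add: field_simps power2_eq_square)
qed

lemma det_scalar_minus_rank2_3:
  fixes y :: real and a n u w :: "real^3"
  shows "det (\<chi> i j. (if i = j then y else 0) - (a$i * u$j + n$i * w$j)) =
    y^3 - (a \<bullet> u + n \<bullet> w) * y^2 + ((a \<bullet> u) * (n \<bullet> w) - (a \<bullet> w) * (n \<bullet> u)) * y"
  unfolding det_3 inner_vec_def sum_3
  by (simp add: power2_eq_square power3_eq_cube) (simp add: algebra_simps)

lemma AtA_rank_one_line_nth: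
  fixes lam t :: real and a n :: "real^3"
  shows "(transpose (lam *\<^sub>R mat 1 + t *\<^sub>R tensor a n) ** (lam *\<^sub>R mat 1 + t *\<^sub>R tensor a n)) $ i $ j
    = (if i = j then lam^2 else 0) + (a$i * (lam * t * n$j) + n$i * (lam * t * a$j + t^2 * (a \<bullet> a) * n$j))"
  using exhaust_3[of i] exhaust_3[of j]
  by (auto simp: matrix_matrix_mult_def transpose_def sum_3 tensor_def mat_def inner_vec_def
      power2_eq_square algebra_simps)

lemma poly_charpoly_AtA_rank_one_line:
  fixes lam t :: real and a n :: "real^3"
  defines "M \<equiv> lam *\<^sub>R mat 1 + t *\<^sub>R tensor a n"
  shows "poly (charpoly (transpose M ** M)) x = (x - lam^2) *
    (x^2 - (2 * lam^2 + 2 * lam * t * (a \<bullet> n) + t^2 * (a \<bullet> a) * (n \<bullet> n)) * x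
       + (lam^2 + lam * t * (a \<bullet> n))^2)"
proof -
  have entries: "(\<chi> i j. (if i = j then x else 0) - (transpose M ** M)$i$j) =
    (\<chi> i j. (if i = j then x - lam^2 else 0)
       - (a$i * ((lam * t) *\<^sub>R n)$j + n$i * ((lam * t) *\<^sub>R a + (t^2 * (a \<bullet> a)) *\<^sub>R n)$j))"
    unfolding M_def AtA_rank_one_line_nth by (simp add: vec_eq_iff algebra_simps)
  show ?thesis
    unfolding poly_charpoly_3 entries det_scalar_minus_rank2_3
    by (simp add: inner_add_right inner_commute[of n a] power2_eq_square power3_eq_cube algebra_simps)
qed

lemma Pfun_rank_one_line:
  fixes lam t :: real and a n :: "real^3"
  assumes lam: "lam > 0"
  shows "Pfun lam (lam *\<^sub>R mat 1 + t *\<^sub>R tensor a n) = \<bar>lam^2 + lam * (a \<bullet> n) * t\<bar> - lam^2"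
proof -
  define M where "M = lam *\<^sub>R mat 1 + t *\<^sub>R tensor a n"
  define s where "s = 2 * lam^2 + 2 * lam * t * (a \<bullet> n) + t^2 * (a \<bullet> a) * (n \<bullet> n)"
  define p where "p = lam^2 + lam * t * (a \<bullet> n)"
  have cs: "(a \<bullet> n)^2 \<le> (a \<bullet> a) * (n \<bullet> n)"
    using Cauchy_Schwarz_ineq[of a n] by simp
  have "s - 2 * p = t^2 * ((a \<bullet> a) * (n \<bullet> n))"
    unfolding s_def p_def by (simp add: algebra_simps)
  moreover have "s + 2 * p = (2 * lam + t * (a \<bullet> n))^2 + t^2 * ((a \<bullet> a) * (n \<bullet> n) - (a \<bullet> n)^2)"
    unfolding s_def p_def by (simp add: power2_eq_square algebra_simps)
  moreover have "0 \<le> t^2 * ((a \<bullet> a) * (n \<bullet> n))" "0 \<le> t^2 * ((a \<bullet> a) * (n \<bullet> n) - (a \<bullet> n)^2)"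
    using cs by simp_all
  ultimately have "2 * \<bar>p\<bar> \<le> s"
    by (smt (verit) zero_le_power2)
  then obtain r1 r2 where r: "r1 \<ge> 0" "r2 \<ge> 0" "r1 + r2 = s" "r1 * r2 = p^2"
    by (rule split_sum_product_nonneg)
  have "poly (charpoly (transpose M ** M)) x = poly ([:-(lam^2),1:] * [:-r1,1:] * [:-r2,1:]) x" for x
  proof -
    have "(x - r1) * (x - r2) = x^2 - (r1 + r2) * x + r1 * r2"
      by (simp add: power2_eq_square algebra_simps)
    then have quadratic: "(x - r1) * (x - r2) = x^2 - s * x + p^2"
      using r by simp
    have "poly ([:-(lam^2),1:] * [:-r1,1:] * [:-r2,1:]) x = (x - lam^2) * ((x - r1) * (x - r2))"
      by (simp add: algebra_simps)
    then show ?thesis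
      unfolding M_def poly_charpoly_AtA_rank_one_line s_def[symmetric] p_def[symmetric] quadratic
      by simp
  qed
  then have "charpoly (transpose M ** M) = [:-(lam^2),1:] * [:-r1,1:] * [:-r2,1:]"
    using poly_eq_poly_eq_iff by blast
  then have "Pfun lam M = sqrt (lam^2) * sqrt r1 + sqrt (lam^2) * sqrt r2 + sqrt r1 * sqrt r2
        - lam * (sqrt (lam^2) + sqrt r1 + sqrt r2)"
    by (rule Pfun_eq_if_charpoly_AtA)
  also have "\<dots> = sqrt (r1 * r2) - lam^2"
    using lam by (simp add: real_sqrt_mult power2_eq_square algebra_simps)
  also have "\<dots> = \<bar>p\<bar> - lam^2"
    using r by simp
  finally show ?thesis
    unfolding M_def p_def by (simp add: algebra_simps)
qed

lemma Pfun_rank_one_convex_at_scaled_identity: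
  fixes lam :: real and a n :: "real^3"
  assumes "lam > 0"
  shows "convex_on UNIV (\<lambda>t. Pfun lam (lam *\<^sub>R mat 1 + t *\<^sub>R tensor a n))"
proof -
  have "convex_on UNIV (\<lambda>t. \<bar>lam^2 + lam * (a \<bullet> n) * t\<bar> - lam^2)"
    by (intro convex_on_diff convex_on_abs_affine) (simp add: concave_on_const)
  then show ?thesis
    by (simp add: Pfun_rank_one_line[OF assms])
qed

theorem proposition2p3:
  fixes lam :: real
  assumes "lam > 0"
  shows "(\<forall>a n :: real^3. convex_on UNIV (\<lambda>t. Pfun lam (lam *\<^sub>R mat 1 + t *\<^sub>R tensor a n)))
    \<and> \<not> (\<exists>(C1 :: real^3^3) (C2 :: real^3^3) (C3 :: real). \<forall>A :: real^3^3.
          Pfun lam A \<ge> Pfun lam (lam *\<^sub>R mat 1) + frob C1 (A - lam *\<^sub>R mat 1)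
            + frob C2 (cof A - lam^2 *\<^sub>R mat 1) + C3 * (det A - lam^3))"
  using Pfun_rank_one_convex_at_scaled_identity[OF assms]
    Pfun_not_polyconvex_at_scaled_identity[OF assms]
  by blast

end
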